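(* Let $q\in(0,1)$. Every fixed point $p\in\mathcal M_1^+$ of $\mathcal R_q$ other than $(1,0,0,\dots)$ satisfies $p_k>0$ for all $k\ge0$. None of these fixed points is reversible, i.e. for none of them does $T^{(q)}_{ij,k\ell}p_kp_\ell=T^{(q)}_{k\ell,ij}p_ip_j$ hold for all $i,j,k,\ell\ge0$.
   Context: $\mathcal M_1^+$ is the set of probability measures on $\mathbb N_0$, identified with nonnegative sequences summing to $1$. For $q\in[0,1]$, $$T^{(q)}_{ij,k\ell}=C^{(q)}_{k\ell}\,\delta_{i+j,k+\ell}\,(1+\min\{k,\ell,i,j\})\,q^{\max\{0,\ \min\{k,\ell\}-\min\{i,j\}\}},$$ with $0^0=1$ and $C^{(q)}_{k\ell}>0$ chosen so that $\sum_{i,j\ge0}T^{(q)}_{ij,k\ell}=1$. The recombinator on $\mathcal M_1^+$ is $\mathcal R_q(p)_i=\sum_{j,k,\ell\ge0}T^{(q)}_{ij,k\ell}p_kp_\ell$. *)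

theory Defs
  imports "HOL-Analysis.Analysis"
begin

text \<open>Unnormalised weight: (1 + min{k,l,i,j}) * q^(max{0, min{k,l} - min{i,j}}).
  Natural-number subtraction truncates at 0, which realises the max with 0.\<close>
definition wgt :: "real \<Rightarrow> nat \<Rightarrow> nat \<Rightarrow> nat \<Rightarrow> nat \<Rightarrow> real" where
  "wgt q i j k l = real (1 + min (min k l) (min i j)) * q ^ (min k l - min i j)"

text \<open>Normalising constant C_{kl}: chosen so that the sum over all (i,j) of T_{ij,kl} is 1;
  only pairs with i + j = k + l contribute.\<close>
definition Cq :: "real \<Rightarrow> nat \<Rightarrow> nat \<Rightarrow> real" where
  "Cq q k l = 1 / (\<Sum>i\<le>k + l. wgt q i (k + l - i) k l)"

definition Tq :: "real \<Rightarrow> nat \<Rightarrow> nat \<Rightarrow> nat \<Rightarrow> nat \<Rightarrow> real" where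
  "Tq q i j k l = Cq q k l * (if i + j = k + l then 1 else 0) * wgt q i j k l"

definition M1plus :: "(nat \<Rightarrow> real) set" where
  "M1plus = {p. (\<forall>k. 0 \<le> p k) \<and> p sums 1}"

definition Rq :: "real \<Rightarrow> (nat \<Rightarrow> real) \<Rightarrow> nat \<Rightarrow> real" where
  "Rq q p i = (\<Sum>\<^sub>\<infinity>(j, k, l)\<in>(UNIV :: (nat \<times> nat \<times> nat) set). Tq q i j k l * p k * p l)"

definition reversible :: "real \<Rightarrow> (nat \<Rightarrow> real) \<Rightarrow> bool" where
  "reversible q p \<longleftrightarrow> (\<forall>i j k l. Tq q i j k l * p k * p l = Tq q k l i j * p i * p j)"

end

theory Submission
  imports Defs
begin

text \<open>
  Positivity: T_{ij,nn} > 0 whenever i + j = 2n, so the fixed-point equation gives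
  p_i \<ge> T_{i(2n-i),nn} p_n^2 > 0 for every i \<le> 2n. A fixed point other than the point mass
  at 0 has p_n > 0 for some n \<ge> 1, and repeatedly doubling n reaches every index.

  Non-reversibility: once all p_k > 0, multiplying the detailed-balance equations for the
  pairs (1,1)/(0,2), (1,2)/(0,3) and (2,2)/(1,3) cancels the common factor
  p_0 p_1^2 p_2^2 p_3 and leaves an identity between transition probabilities alone. It
  amounts to (1 - q)(6 + 2q - q^2) = 0, which fails for 0 < q < 1.
\<close>

lemma wgt_nonneg: "0 \<le> q \<Longrightarrow> 0 \<le> wgt q i j k l"
  unfolding wgt_def by simp

lemma wgt_pos: "0 < q \<Longrightarrow> 0 < wgt q i j k l"
  unfolding wgt_def by simp

lemma Tq_nonneg: "0 \<le> q \<Longrightarrow> 0 \<le> Tq q i j k l"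
  unfolding Tq_def Cq_def by (simp add: wgt_nonneg sum_nonneg)

lemma Tq_pos: "0 < q \<Longrightarrow> i + j = k + l \<Longrightarrow> 0 < Tq q i j k l"
  unfolding Tq_def Cq_def by (simp add: wgt_pos sum_pos)

lemma Tq_le_1:
  assumes "0 \<le> q"
  shows "Tq q i j k l \<le> 1"
proof (cases "i + j = k + l")
  case True
  define S where "S = (\<Sum>i'\<le>k + l. wgt q i' (k + l - i') k l)"
  have "wgt q i j k l = wgt q i (k + l - i) k l"
    using True by (metis add_diff_cancel_left')
  also have "\<dots> \<le> S"
    unfolding S_def by (rule member_le_sum) (use True assms wgt_nonneg in auto)
  finally have "wgt q i j k l \<le> S" .
  moreover have "Tq q i j k l = wgt q i j k l / S"
    unfolding Tq_def Cq_def S_def using True by simp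
  moreover have "0 \<le> wgt q i j k l" by (rule wgt_nonneg[OF assms])
  ultimately show ?thesis by (auto simp: divide_le_eq_1)
next
  case False
  then show ?thesis unfolding Tq_def by simp
qed

lemma M1plus_has_sum: "p \<in> M1plus \<Longrightarrow> (p has_sum 1) UNIV"
  unfolding M1plus_def by (auto intro: sums_nonneg_imp_has_sum)

lemma M1plus_product_summable:
  assumes "p \<in> M1plus"
  shows "(\<lambda>(k, l). p k * p l) summable_on UNIV"
proof -
  have nonneg: "\<And>k. 0 \<le> p k" using assms by (simp add: M1plus_def)
  have "(\<lambda>(k, l). p k * p l) summable_on UNIV \<times> UNIV"
  proof (rule summable_on_SigmaI[where g = "\<lambda>k. p k * 1"])
    show "((\<lambda>l. case (k, l) of (k, l) \<Rightarrow> p k * p l) has_sum p k * 1) UNIV" for k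
      using has_sum_cmult_right[OF M1plus_has_sum[OF assms]] by simp
    show "(\<lambda>k. p k * 1) summable_on UNIV"
      using M1plus_has_sum[OF assms] by (simp add: has_sum_imp_summable)
  qed (simp add: nonneg)
  then show ?thesis by simp
qed

text \<open>Only the triples with \<open>j = k + l - i\<close> contribute, and on them the summand is at most
  \<open>p\<^sub>k p\<^sub>l\<close>; so the sum is a reindexed subsum of the product measure.\<close>

lemma Rq_summable:
  assumes "p \<in> M1plus" and "0 \<le> q"
  shows "(\<lambda>(j, k, l). Tq q i j k l * p k * p l) summable_on UNIV"
proof -
  have nonneg: "\<And>k. 0 \<le> p k" using assms by (simp add: M1plus_def)
  define g where "g = (\<lambda>(j, k, l). Tq q i j k l * p k * p l)"
  define h where "h = (\<lambda>(k::nat, l::nat). (k + l - i, k, l))"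
  have "inj h" unfolding h_def inj_on_def by auto
  have "(g \<circ> h) summable_on UNIV"
  proof (rule summable_on_comparison_test[OF M1plus_product_summable[OF assms(1)]])
    fix x :: "nat \<times> nat"
    obtain k l where x: "x = (k, l)" by force
    have "Tq q i (k + l - i) k l * (p k * p l) \<le> 1 * (p k * p l)"
      by (rule mult_right_mono) (simp_all add: Tq_le_1 assms(2) nonneg)
    then show "(g \<circ> h) x \<le> (case x of (k, l) \<Rightarrow> p k * p l)"
      unfolding x g_def h_def by (simp add: mult.assoc)
    show "0 \<le> (g \<circ> h) x"
      unfolding x g_def h_def by (simp add: Tq_nonneg assms(2) nonneg)
  qed
  then have "g summable_on range h"
    using summable_on_reindex[OF \<open>inj h\<close>] by blast
  also have "g summable_on range h \<longleftrightarrow> g summable_on UNIV"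
  proof (rule summable_on_cong_neutral)
    fix x assume "x \<in> UNIV - range h"
    obtain j k l where x: "x = (j, k, l)" by (cases x)
    have "x \<noteq> h (k, l)" using \<open>x \<in> UNIV - range h\<close> by blast
    then have "i + j \<noteq> k + l" unfolding x h_def by auto
    then show "g x = 0" unfolding g_def x Tq_def by simp
  qed auto
  finally show ?thesis unfolding g_def .
qed

lemma Tq_mult_le_Rq:
  assumes "p \<in> M1plus" and "0 \<le> q"
  shows "Tq q i j k l * p k * p l \<le> Rq q p i"
proof -
  have nonneg: "\<And>k. 0 \<le> p k" using assms by (simp add: M1plus_def)
  let ?g = "\<lambda>(j, k, l). Tq q i j k l * p k * p l"
  have "infsum ?g {(j, k, l)} \<le> infsum ?g UNIV"
    by (rule infsum_mono_neutral)
       (use Rq_summable[OF assms] in \<open>auto simp: Tq_nonneg assms(2) nonneg\<close>)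
  then show ?thesis unfolding Rq_def by simp
qed

lemma Rq_pos:
  assumes "p \<in> M1plus" and "0 < q" and "0 < p n" and "i \<le> 2 * n"
  shows "0 < Rq q p i"
proof -
  have "0 < Tq q i (2 * n - i) n n"
    by (rule Tq_pos) (use assms in auto)
  then have "0 < Tq q i (2 * n - i) n n * p n * p n"
    using assms(3) by simp
  also have "\<dots> \<le> Rq q p i"
    using Tq_mult_le_Rq assms(1,2) by simp
  finally show ?thesis .
qed

lemma M1plus_nonzero_outside_0:
  assumes "p \<in> M1plus" and "p \<noteq> (\<lambda>k. if k = 0 then 1 else 0)"
  obtains n where "0 < n" and "0 < p n"
proof -
  have nonneg: "\<And>k. 0 \<le> p k" and "p sums 1" using assms by (auto simp: M1plus_def)
  have "\<exists>n>0. p n \<noteq> 0"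
  proof (rule ccontr)
    assume "\<not> (\<exists>n>0. p n \<noteq> 0)"
    then have zero: "\<And>n. n \<noteq> 0 \<Longrightarrow> p n = 0" by blast
    then have "p sums (\<Sum>n\<in>{0}. p n)" by (intro sums_finite) auto
    then have "p 0 = 1" using \<open>p sums 1\<close> sums_unique2 by force
    with zero have "p = (\<lambda>k. if k = 0 then 1 else 0)" by auto
    with assms(2) show False by contradiction
  qed
  then obtain n where "0 < n" and "p n \<noteq> 0" by blast
  with nonneg[of n] show ?thesis by (intro that) auto
qed

lemma fixed_point_pos:
  assumes "p \<in> M1plus" and "0 < q" and "Rq q p = p"
    and "0 < n" and "0 < p n"
  shows "0 < p k"
proof -
  have doubling: "0 < p i" if "0 < p m" and "i \<le> 2 * m" for i m
    using Rq_pos[OF assms(1,2) that] unfolding assms(3) .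
  have powers: "0 < p (2 ^ m * n)" for m
  proof (induction m)
    case 0
    then show ?case using assms(5) by simp
  next
    case (Suc m)
    then show ?case using doubling[of "2 ^ m * n" "2 ^ Suc m * n"] by simp
  qed
  have "k < 2 ^ k" by (rule less_exp)
  also have "\<dots> \<le> 2 ^ k * n" using assms(4) by simp
  finally have "k \<le> 2 * (2 ^ k * n)" by simp
  then show ?thesis using doubling[OF powers[of k]] by blast
qed

lemma Tq_values:
  assumes "0 < q"
  shows "Tq q 0 2 1 1 = q / (2 + 2 * q)" "Tq q 1 1 0 2 = 1 / 3"
    and "Tq q 0 3 1 2 = q / (4 + 2 * q)" "Tq q 1 2 0 3 = 1 / 4"
    and "Tq q 1 3 2 2 = 2 * q / (3 + 4 * q + 2 * q ^ 2)" "Tq q 2 2 1 3 = 2 / (6 + 2 * q)"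
  using assms by (simp_all add: Tq_def Cq_def wgt_def numeral_eq_Suc atMost_Suc field_simps)

lemma reversible_imp_Tq_cycle_identity:
  assumes "reversible q p" and "\<And>k. 0 < p k"
  shows "Tq q 0 3 1 2 * Tq q 2 2 1 3 * Tq q 1 1 0 2 = Tq q 1 2 0 3 * Tq q 1 3 2 2 * Tq q 0 2 1 1"
proof -
  have "Tq q 0 3 1 2 * p 1 * p 2 = Tq q 1 2 0 3 * p 0 * p 3"
    and "Tq q 1 3 2 2 * p 2 * p 2 = Tq q 2 2 1 3 * p 1 * p 3"
    and "Tq q 0 2 1 1 * p 1 * p 1 = Tq q 1 1 0 2 * p 0 * p 2"
    using assms(1) unfolding reversible_def by blast+
  then have "(Tq q 0 3 1 2 * p 1 * p 2) * (Tq q 2 2 1 3 * p 1 * p 3) * (Tq q 1 1 0 2 * p 0 * p 2)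
      = (Tq q 1 2 0 3 * p 0 * p 3) * (Tq q 1 3 2 2 * p 2 * p 2) * (Tq q 0 2 1 1 * p 1 * p 1)"
    by (simp only:)
  then have "(Tq q 0 3 1 2 * Tq q 2 2 1 3 * Tq q 1 1 0 2) * (p 0 * p 1 * p 1 * p 2 * p 2 * p 3)
      = (Tq q 1 2 0 3 * Tq q 1 3 2 2 * Tq q 0 2 1 1) * (p 0 * p 1 * p 1 * p 2 * p 2 * p 3)"
    by (simp only: ac_simps)
  moreover have "p 0 * p 1 * p 1 * p 2 * p 2 * p 3 \<noteq> 0"
    using assms(2) by (simp add: less_imp_neq[symmetric])
  ultimately show ?thesis by simp
qed

lemma Tq_cycle_identity_fails:
  assumes "0 < q" and "q < 1"
  shows "Tq q 0 3 1 2 * Tq q 2 2 1 3 * Tq q 1 1 0 2 \<noteq> Tq q 1 2 0 3 * Tq q 1 3 2 2 * Tq q 0 2 1 1"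
proof
  assume "Tq q 0 3 1 2 * Tq q 2 2 1 3 * Tq q 1 1 0 2 = Tq q 1 2 0 3 * Tq q 1 3 2 2 * Tq q 0 2 1 1"
  moreover have "0 < 3 + 4 * q + 2 * q ^ 2" using assms by (simp add: add_pos_nonneg)
  ultimately have "4 * (3 + 4 * q + 2 * q ^ 2) * (2 + 2 * q) = 3 * q * (4 + 2 * q) * (6 + 2 * q)"
    using assms unfolding Tq_values[OF assms(1)]
    by (simp add: divide_simps) (simp add: algebra_simps)
  then have "(1 - q) * (6 + 2 * q - q ^ 2) = 0"
    by (simp add: algebra_simps power2_eq_square power3_eq_cube)
  moreover have "q ^ 2 < 1" using assms by (simp add: power_less_one_iff)
  ultimately show False using assms by simp
qed

theorem proposition15:
  fixes q :: real and p :: "nat \<Rightarrow> real"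
  assumes "0 < q" and "q < 1"
    and "p \<in> M1plus"
    and "Rq q p = p"
    and "p \<noteq> (\<lambda>k. if k = 0 then 1 else 0)"
  shows "(\<forall>k. 0 < p k) \<and> \<not> reversible q p"
proof -
  obtain n where "0 < n" and "0 < p n"
    using M1plus_nonzero_outside_0[OF assms(3,5)] .
  then have pos: "\<And>k. 0 < p k"
    using fixed_point_pos[OF assms(3,1,4)] by blast
  have "\<not> reversible q p"
    using reversible_imp_Tq_cycle_identity[of q p] pos Tq_cycle_identity_fails[OF assms(1,2)]
    by blast
  with pos show ?thesis by blast
qed

end
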